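(* Let $d\ge 1$, $n\ge 1$, $r\ge 0$ be integers and let $N$ be a polynomial (with complex coefficients) in the components of $u\in\mathbb{C}^n$ and of all its spatial partial derivatives $D^\alpha u$, $|\alpha|\le r$, $x\in\mathbb{T}^d$. Let $s>s_0=d+r$ and $C>0$. Suppose $a=(a_k)_{k\in\mathbb{Z}^d}$, $a_k\in\mathbb{C}^n$, satisfies $|a_k|\le C/|k|^s$ for $k\neq 0$ and $|a_0|\le C$. Then the formal series defining $N_k(a)$, $\frac{\partial N_k}{\partial a_j}(a)$ and $\frac{\partial^2 N_k}{\partial a_{j_1}\partial a_{j_2}}(a)$ (for all $k,j,j_1,j_2\in\mathbb{Z}^d$) are absolutely convergent, and there exist constants $D=D(C,s)$, $D_1=D_1(C,s)$, $D_2=D_2(C,s)$ (depending also on the fixed $N$, $d$, $r$) such that for all $k,j,j_1,j_2\in\mathbb{Z}^d$: $$|N_k|\le \frac{D}{|k|^{s-r}}\ (k\neq 0),\qquad |N_0|\le D,$$ $$\left|\frac{\partial N_k}{\partial a_j}\right|\le \frac{D_1|j|^r}{|k-j|^{s-r}}\ (k\neq j),\qquad \left|\frac{\partial N_k}{\partial a_j}\right|\le D_1|j|^r\ (k=j),$$ $$\left|\frac{\partial^2 N_k}{\partial a_{j_1}\partial a_{j_2}}\right|\le \frac{D_2|j_1|^r|j_2|^r}{|k-j_1-j_2|^{s-r}}\ (k\neq j_1+j_2),\qquad \left|\frac{\partial^2 N_k}{\partial a_{j_1}\partial a_{j_2}}\right|\le D_2|j_1|^r|j_2|^r\ (k=j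_1+j_2).$$
   Context: $\mathbb{T}^d=(\mathbb{R}\bmod 2\pi)^d$. On $\mathbb{Z}^d$ a norm $|\cdot|$ is fixed satisfying $|(k_1,\dots,k_d)|\ge |k_j|$ for each $j$; by convention $|0|$ is redefined to be $1$ in these estimates. For $\alpha\in\mathbb{N}^d$, $D^\alpha$ denotes the partial derivative $\partial^{|\alpha|}/\partial x_1^{\alpha_1}\cdots\partial x_d^{\alpha_d}$, $|\alpha|=\sum\alpha_i$, and $k^\alpha=k_1^{\alpha_1}\cdots k_d^{\alpha_d}$. To a sequence $a=(a_k)$ associate the formal series $u=\sum_k a_k e^{\mathrm{i}k\cdot x}$, so $D^\alpha u$ has formal Fourier coefficients $\mathrm{i}^{|\alpha|}k^\alpha a_k$. $N_k(a)$ is the formal $k$-th Fourier coefficient of $N(u,Du,\dots,D^ru)$, obtained by expanding each monomial of $N$ as a convolution sum $\sum_{k_1+\dots+k_l=k} v_{k_1}\cdots v_{k_l}$ where each $v_{k_i}$ is a Fourier coefficient of a component of $u$ or of one of its derivatives of order $\le r$. The symbols for derivatives are the formal series $$\frac{\partial N_k}{\partial a_j}=\sum_{|\alpha|\le r}\Big(\frac{\partial N}{\partial(D^\alpha u)}(u,\dots,D^ru)\Big)_{k-j}\mathrm{i}^{|\alpha|}j^\alpha,$$ $$\frac{\partial^2 N_k}{\partial a_{j_1}\partial a_{j_2}}=\sum_{|\alpha_1|,|\alpha_2|\le r}\Big(\frac{\partial^2 N}{\partial(D^{\alpha_1}u)\partial(D^{\alpha_2}u)}(u,\dots,D^ru)\Big)_{k-j_1-j_2}\mathrm{i}^{|\alpha_1|+|\alpha_2|}j_1^{\alpha_1}j_2^{\alpha_2},$$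 where $\partial N/\partial(D^\alpha u)$ denotes the partial derivative of the polynomial $N$ with respect to the argument slot $D^\alpha u$, and $(\cdot)_m$ is the formal $m$-th Fourier coefficient (convolution expansion) of the resulting polynomial expression. *)

theory Defs
  imports "HOL-Analysis.Analysis"
begin

text \<open>Lattice points of Z^d are vectors of type int^'d; multi-indices are nat^'d.
  The solution coefficients a_k live in complex^'n (components of u in C^n).\<close>

definition is_Zd_norm :: "(int^'d \<Rightarrow> real) \<Rightarrow> bool" where
  "is_Zd_norm nrm \<longleftrightarrow>
     (\<forall>k i. \<bar>real_of_int (k $ i)\<bar> \<le> nrm k) \<and>
     (\<forall>k l. nrm (k + l) \<le> nrm k + nrm l) \<and>
     (\<forall>(m::int) k. nrm (m *s k) = real_of_int \<bar>m\<bar> * nrm k)"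

definition nrm0 :: "(int^'d \<Rightarrow> real) \<Rightarrow> int^'d \<Rightarrow> real" where
  "nrm0 nrm k = (if k = 0 then 1 else nrm k)"

definition mi_abs :: "nat^'d::finite \<Rightarrow> nat" where
  "mi_abs \<alpha> = (\<Sum>i\<in>UNIV. \<alpha> $ i)"

definition mi_pow :: "int^'d::finite \<Rightarrow> nat^'d \<Rightarrow> complex" where
  "mi_pow k \<alpha> = (\<Prod>i\<in>UNIV. of_int (k $ i) ^ (\<alpha> $ i))"

text \<open>A variable of the polynomial N: the c-th component of D^alpha u.
  A monomial is a list of variables (with repetition); a polynomial is a list
  of (coefficient, monomial) pairs.\<close>
type_synonym ('n,'d) pvar = "'n \<times> (nat^'d)"
type_synonym ('n,'d) poly_rep = "(complex \<times> ('n,'d) pvar list) list"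

text \<open>Fourier coefficient at wavenumber m of the variable (c, alpha), i.e. of
  the c-th component of D^alpha u:  i^|alpha| m^alpha (a_m)_c.\<close>
definition var_coeff :: "(int^'d \<Rightarrow> complex^'n) \<Rightarrow> int^'d \<Rightarrow> ('n,'d) pvar \<Rightarrow> complex" where
  "var_coeff a m v = \<i> ^ mi_abs (snd v) * mi_pow m (snd v) * (a m $ fst v)"

definition conv_set :: "nat \<Rightarrow> int^'d \<Rightarrow> (int^'d) list set" where
  "conv_set l k = {ms. length ms = l \<and> sum_list ms = k}"

definition conv_term :: "(int^'d \<Rightarrow> complex^'n) \<Rightarrow> ('n,'d) pvar list \<Rightarrow> (int^'d) list \<Rightarrow> complex" where
  "conv_term a vs ms = (\<Prod>(m,v)\<leftarrow>zip ms vs. var_coeff a m v)"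

text \<open>Formal k-th Fourier coefficient of a monomial (convolution sum).\<close>
definition mono_coeff :: "(int^'d \<Rightarrow> complex^'n) \<Rightarrow> ('n,'d) pvar list \<Rightarrow> int^'d \<Rightarrow> complex" where
  "mono_coeff a vs k = infsum (conv_term a vs) (conv_set (length vs) k)"

definition poly_coeff :: "(int^'d \<Rightarrow> complex^'n) \<Rightarrow> ('n,'d) poly_rep \<Rightarrow> int^'d \<Rightarrow> complex" where
  "poly_coeff a P k = (\<Sum>(c,vs)\<leftarrow>P. c * mono_coeff a vs k)"

definition poly_abs_conv :: "(int^'d \<Rightarrow> complex^'n) \<Rightarrow> ('n,'d) poly_rep \<Rightarrow> int^'d \<Rightarrow> bool" where
  "poly_abs_conv a P k \<longleftrightarrow>
     (\<forall>(c,vs)\<in>set P. (\<lambda>ms. norm (conv_term a vs ms)) summable_on conv_set (length vs) k)"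

definition remove_pos :: "nat set \<Rightarrow> 'a list \<Rightarrow> 'a list" where
  "remove_pos S xs = [xs ! i. i \<leftarrow> [0..<length xs], i \<notin> S]"

text \<open>Partial derivative of a polynomial with respect to the variable v.\<close>
definition dpoly :: "('n,'d) pvar \<Rightarrow> ('n,'d) poly_rep \<Rightarrow> ('n,'d) poly_rep" where
  "dpoly v P = concat (map (\<lambda>(c,vs).
      [(c, remove_pos {p} vs). p \<leftarrow> [0..<length vs], vs ! p = v]) P)"

definition d2poly :: "('n,'d) pvar \<Rightarrow> ('n,'d) pvar \<Rightarrow> ('n,'d) poly_rep \<Rightarrow> ('n,'d) poly_rep" where
  "d2poly v w P = concat (map (\<lambda>(c,vs).
      [(c, remove_pos {p, q} vs). p \<leftarrow> [0..<length vs], q \<leftarrow> [0..<length vs],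
                                 p \<noteq> q, vs ! p = v, vs ! q = w]) P)"

definition poly_order_le :: "nat \<Rightarrow> ('n,'d::finite) poly_rep \<Rightarrow> bool" where
  "poly_order_le r P \<longleftrightarrow> (\<forall>(c,vs)\<in>set P. \<forall>v\<in>set vs. mi_abs (snd v) \<le> r)"

definition mis_le :: "nat \<Rightarrow> (nat^'d) set" where
  "mis_le r = {\<alpha>. mi_abs \<alpha> \<le> r}"

definition Nk :: "('n \<Rightarrow> ('n,'d) poly_rep) \<Rightarrow> (int^'d \<Rightarrow> complex^'n) \<Rightarrow> int^'d \<Rightarrow> complex^'n" where
  "Nk N a k = (\<chi> e. poly_coeff a (N e) k)"

definition dNk :: "nat \<Rightarrow> ('n \<Rightarrow> ('n,'d) poly_rep) \<Rightarrow> (int^'d \<Rightarrow> complex^'n) \<Rightarrow>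
                   int^'d \<Rightarrow> int^'d \<Rightarrow> complex^'n^'n" where
  "dNk r N a k j = (\<chi> e c. \<Sum>\<alpha>\<in>mis_le r.
      poly_coeff a (dpoly (c,\<alpha>) (N e)) (k - j) * \<i> ^ mi_abs \<alpha> * mi_pow j \<alpha>)"

definition d2Nk :: "nat \<Rightarrow> ('n \<Rightarrow> ('n,'d) poly_rep) \<Rightarrow> (int^'d \<Rightarrow> complex^'n) \<Rightarrow>
                   int^'d \<Rightarrow> int^'d \<Rightarrow> int^'d \<Rightarrow> complex^'n^'n^'n" where
  "d2Nk r N a k j1 j2 = (\<chi> e c1 c2. \<Sum>\<alpha>1\<in>mis_le r. \<Sum>\<alpha>2\<in>mis_le r.
      poly_coeff a (d2poly (c1,\<alpha>1) (c2,\<alpha>2) (N e)) (k - j1 - j2)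
        * \<i> ^ (mi_abs \<alpha>1 + mi_abs \<alpha>2) * mi_pow j1 \<alpha>1 * mi_pow j2 \<alpha>2)"

end

theory Submission
  imports Defs
begin

text \<open>
  Write \<open>\<langle>m\<rangle> = nrm0 nrm m\<close> for the norm of \<open>m\<close>, with \<open>\<langle>0\<rangle> = 1\<close>. The Fourier coefficients of
  \<open>D\<^sup>\<alpha> u\<close>, \<open>|\<alpha>| \<le> r\<close>, are bounded by \<open>C \<langle>m\<rangle>^r \<langle>m\<rangle>^(-s) = C w(m)\<close> with the weight
  \<open>w(m) = \<langle>m\<rangle>^(-\<sigma>) = decay nrm \<sigma> m\<close>, \<open>\<sigma> = s - r > d\<close>. This weight is summable over \<open>\<int>\<^sup>d\<close> (it is
  dominated by a product of one-dimensional weights), and it is almost closed under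
  convolution, \<open>\<Sum>\<^sub>m w(m) w(k - m) \<le> K w(k)\<close>, because one of \<open>m\<close> and \<open>k - m\<close> has norm
  at least \<open>\<langle>k\<rangle>/2\<close>. Iterating, the convolution series of a monomial of degree \<open>l\<close>
  converges absolutely with sum at most \<open>(C K)^l w(k)\<close>. Partial derivatives of \<open>N\<close>
  are again polynomials in derivatives of order at most \<open>r\<close>, and the factors \<open>j\<^sup>\<alpha>\<close>
  in the derivative symbols contribute at most \<open>\<langle>j\<rangle>^r\<close>.
\<close>

section \<open>Norms on the lattice\<close>

lemma Zd_norm_zero: "is_Zd_norm nrm \<Longrightarrow> nrm 0 = 0"
  unfolding is_Zd_norm_def by (metis mult_eq_0_iff of_int_0 abs_zero vector_smult_lzero)

lemma abs_component_le_Zd_norm: "is_Zd_norm nrm \<Longrightarrow> \<bar>real_of_int (k $ i)\<bar> \<le> nrm k"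
  unfolding is_Zd_norm_def by blast

lemma Zd_norm_ge_one:
  assumes "is_Zd_norm nrm" "k \<noteq> 0"
  shows "1 \<le> nrm k"
proof -
  obtain i where "k $ i \<noteq> 0" using assms(2) by (metis vec_eq_iff zero_index)
  then have "1 \<le> \<bar>real_of_int (k $ i)\<bar>" by linarith
  with abs_component_le_Zd_norm[OF assms(1)] show ?thesis by (meson order_trans)
qed

lemma nrm0_ge_one: "is_Zd_norm nrm \<Longrightarrow> 1 \<le> nrm0 nrm k"
  using Zd_norm_ge_one unfolding nrm0_def by auto

lemma nrm0_nonneg: "is_Zd_norm nrm \<Longrightarrow> 0 \<le> nrm0 nrm k"
  using nrm0_ge_one[of nrm k] by linarith

lemma abs_component_le_nrm0: "is_Zd_norm nrm \<Longrightarrow> \<bar>real_of_int (k $ i)\<bar> \<le> nrm0 nrm k"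
  using abs_component_le_Zd_norm unfolding nrm0_def by auto

lemma nrm0_triangle:
  assumes "is_Zd_norm nrm"
  shows "nrm0 nrm k \<le> nrm0 nrm m + nrm0 nrm (k - m)"
proof (cases "k = 0")
  case True
  then have "nrm0 nrm k = 1" by (simp add: nrm0_def)
  with nrm0_ge_one[OF assms, of m] nrm0_ge_one[OF assms, of "k - m"] show ?thesis by linarith
next
  case False
  have "nrm (m + (k - m)) \<le> nrm m + nrm (k - m)"
    using assms unfolding is_Zd_norm_def by blast
  moreover have "nrm l \<le> nrm0 nrm l" for l
    using Zd_norm_zero[OF assms] by (simp add: nrm0_def)
  ultimately show ?thesis using False by (simp add: nrm0_def add_mono order_trans)
qed

section \<open>A summable weight that is almost closed under convolution\<close>

lemma summable_on_int_powr:
  assumes "\<tau> > 1"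
  shows "(\<lambda>t::int. (1 + \<bar>real_of_int t\<bar>) powr (-\<tau>)) summable_on UNIV"
proof -
  let ?g = "\<lambda>t::int. (1 + \<bar>real_of_int t\<bar>) powr (-\<tau>)"
  have "summable (\<lambda>n. real n powr (-\<tau>))"
    using assms summable_real_powr_iff by simp
  then have "summable (\<lambda>n. norm (real (Suc n) powr (-\<tau>)))"
    by (subst summable_Suc_iff) simp
  then have nat: "(\<lambda>n. (1 + real n) powr (-\<tau>)) summable_on UNIV"
    using norm_summable_imp_summable_on by fastforce
  have "?g summable_on range int"
    by (subst summable_on_reindex) (auto simp: o_def add.commute intro: nat)
  moreover have "?g summable_on range (\<lambda>n. - int n)"
    by (subst summable_on_reindex) (auto simp: o_def add.commute inj_on_def intro: nat)
  moreover have "range int \<union> range (\<lambda>n. - int n) = UNIV"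
    by (auto intro: int_cases2)
  ultimately show ?thesis by (metis summable_on_union)
qed

lemma sum_prod_components_le:
  fixes g :: "'a \<Rightarrow> real" and M :: "('a^'d) set"
  assumes "finite M" "g summable_on UNIV" "\<And>t. 0 \<le> g t"
  shows "(\<Sum>m\<in>M. \<Prod>i\<in>UNIV. g (m $ i)) \<le> (\<Sum>\<^sub>\<infinity>t. g t) ^ CARD('d)"
proof -
  define T where "T = (\<Union>i. (\<lambda>m. m $ i) ` M)"
  have "finite T" using assms(1) by (simp add: T_def)
  define B :: "('a^'d) set" where "B = vec_lambda ` (UNIV \<rightarrow>\<^sub>E T)"
  have "finite B" unfolding B_def using \<open>finite T\<close> by (intro finite_imageI finite_PiE) auto
  have M_sub: "M \<subseteq> B"
  proof
    fix m assume "m \<in> M"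
    then have "vec_nth m \<in> UNIV \<rightarrow>\<^sub>E T" by (auto simp: T_def)
    then show "m \<in> B" unfolding B_def by (metis image_eqI vec_nth_inverse)
  qed
  have "(\<Sum>m\<in>M. \<Prod>i\<in>UNIV. g (m $ i)) \<le> (\<Sum>m\<in>B. \<Prod>i\<in>UNIV. g (m $ i))"
    using \<open>finite B\<close> M_sub assms(3) by (intro sum_mono2) (auto intro: prod_nonneg)
  also have "\<dots> = (\<Sum>p\<in>(UNIV::'d set) \<rightarrow>\<^sub>E T. \<Prod>i\<in>UNIV. g (p i))"
    unfolding B_def by (subst sum.reindex) (auto simp: inj_on_def vec_lambda_inject)
  also have "\<dots> = (\<Prod>i\<in>(UNIV::'d set). \<Sum>t\<in>T. g t)"
    using prod_sum_PiE[of "UNIV::'d set" "\<lambda>_. T" "\<lambda>_ t. g t"] \<open>finite T\<close> by simp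
  also have "\<dots> \<le> (\<Prod>i\<in>(UNIV::'d set). \<Sum>\<^sub>\<infinity>t. g t)"
    using \<open>finite T\<close> assms by (intro prod_mono conjI sum_nonneg finite_sum_le_infsum) auto
  finally show ?thesis by simp
qed

lemma nrm0_powr_neg_le_prod:
  fixes m :: "int^'d"
  assumes "is_Zd_norm nrm" "\<sigma> > 0"
  shows "nrm0 nrm m powr (-\<sigma>)
           \<le> 2 powr \<sigma> * (\<Prod>i\<in>UNIV. (1 + \<bar>real_of_int (m $ i)\<bar>) powr (-(\<sigma> / CARD('d))))"
proof -
  define R where "R = nrm0 nrm m"
  define \<tau> where "\<tau> = \<sigma> / CARD('d)"
  have "R \<ge> 1" using nrm0_ge_one[OF assms(1)] by (simp add: R_def)
  have "(\<Prod>i\<in>UNIV. (1 + \<bar>real_of_int (m $ i)\<bar>) powr \<tau>) \<le> (\<Prod>i\<in>(UNIV::'d set). (2 * R) powr \<tau>)"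
  proof (intro prod_mono conjI powr_mono2)
    fix i
    show "1 + \<bar>real_of_int (m $ i)\<bar> \<le> 2 * R"
      using abs_component_le_nrm0[OF assms(1), of m i] \<open>R \<ge> 1\<close> unfolding R_def by linarith
  qed (use assms(2) in \<open>auto simp: \<tau>_def\<close>)
  also have "\<dots> = (2 * R) powr (\<tau> * CARD('d))"
    using \<open>R \<ge> 1\<close> by (simp add: powr_realpow[symmetric] powr_powr)
  also have "\<dots> = 2 powr \<sigma> * R powr \<sigma>"
    using \<open>R \<ge> 1\<close> by (simp add: \<tau>_def powr_mult)
  finally have le: "(\<Prod>i\<in>UNIV. (1 + \<bar>real_of_int (m $ i)\<bar>) powr \<tau>) \<le> 2 powr \<sigma> * R powr \<sigma>" .
  have "R powr (-\<sigma>) = 2 powr \<sigma> * inverse (2 powr \<sigma> * R powr \<sigma>)"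
    by (simp add: powr_minus)
  also have "\<dots> \<le> 2 powr \<sigma> * inverse (\<Prod>i\<in>UNIV. (1 + \<bar>real_of_int (m $ i)\<bar>) powr \<tau>)"
    using le by (intro mult_left_mono le_imp_inverse_le prod_pos) auto
  also have "inverse (\<Prod>i\<in>UNIV. (1 + \<bar>real_of_int (m $ i)\<bar>) powr \<tau>)
               = (\<Prod>i\<in>UNIV. (1 + \<bar>real_of_int (m $ i)\<bar>) powr (-\<tau>))"
    by (simp add: powr_minus prod_inversef[symmetric] o_def)
  finally show ?thesis by (simp add: R_def \<tau>_def)
qed

definition decay :: "(int^'d \<Rightarrow> real) \<Rightarrow> real \<Rightarrow> int^'d \<Rightarrow> real" where
  "decay nrm \<sigma> k = nrm0 nrm k powr (-\<sigma>)"

lemma decay_pos: "is_Zd_norm nrm \<Longrightarrow> 0 < decay nrm \<sigma> k"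
  using nrm0_ge_one[of nrm k] by (simp add: decay_def)

lemma decay_zero [simp]: "decay nrm \<sigma> 0 = 1"
  by (simp add: decay_def nrm0_def)

lemma decay_nonzero: "k \<noteq> 0 \<Longrightarrow> decay nrm \<sigma> k = 1 / nrm k powr \<sigma>"
  by (simp add: decay_def nrm0_def powr_minus_divide)

lemma summable_decay:
  fixes nrm :: "int^'d \<Rightarrow> real"
  assumes "is_Zd_norm nrm" "\<sigma> > real CARD('d)"
  shows "decay nrm \<sigma> summable_on UNIV"
proof -
  define g where "g t = (1 + \<bar>real_of_int t\<bar>) powr (-(\<sigma> / CARD('d)))" for t :: int
  have "g summable_on UNIV"
    unfolding g_def using assms(2) by (intro summable_on_int_powr) (simp add: less_divide_eq card_gt_0_iff)
  have "sum (decay nrm \<sigma>) M \<le> 2 powr \<sigma> * (\<Sum>\<^sub>\<infinity>t. g t) ^ CARD('d)" if "finite M" for M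
  proof -
    have "sum (decay nrm \<sigma>) M \<le> (\<Sum>m\<in>M. 2 powr \<sigma> * (\<Prod>i\<in>UNIV. g (m $ i)))"
      unfolding decay_def g_def using assms
      by (intro sum_mono nrm0_powr_neg_le_prod) (auto intro: le_less_trans[OF of_nat_0_le_iff])
    also have "\<dots> = 2 powr \<sigma> * (\<Sum>m\<in>M. \<Prod>i\<in>UNIV. g (m $ i))"
      by (simp add: sum_distrib_left)
    also have "\<dots> \<le> 2 powr \<sigma> * (\<Sum>\<^sub>\<infinity>t. g t) ^ CARD('d)"
      using sum_prod_components_le[OF that \<open>g summable_on UNIV\<close>]
      by (intro mult_left_mono) (auto simp: g_def)
    finally show ?thesis .
  qed
  then show ?thesis
    using decay_pos[OF assms(1)]
    by (intro nonneg_bdd_above_summable_on bdd_aboveI) (auto simp: less_imp_le)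
qed

lemma powr_neg_le_of_le_double:
  fixes x y :: real
  assumes "0 < x" "0 < y" "y \<le> 2 * x" "0 \<le> \<sigma>"
  shows "x powr (-\<sigma>) \<le> 2 powr \<sigma> * y powr (-\<sigma>)"
proof -
  have "y powr \<sigma> \<le> 2 powr \<sigma> * x powr \<sigma>"
    using assms powr_mono2[of \<sigma> y "2 * x"] by (simp add: powr_mult)
  have "x powr (-\<sigma>) = 2 powr \<sigma> * inverse (2 powr \<sigma> * x powr \<sigma>)"
    by (simp add: powr_minus)
  also have "\<dots> \<le> 2 powr \<sigma> * inverse (y powr \<sigma>)"
    using \<open>y powr \<sigma> \<le> 2 powr \<sigma> * x powr \<sigma>\<close> assms by (intro mult_left_mono le_imp_inverse_le) auto
  finally show ?thesis by (simp add: powr_minus)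
qed

lemma decay_mult_le:
  assumes "is_Zd_norm nrm" "0 \<le> \<sigma>"
  shows "decay nrm \<sigma> m * decay nrm \<sigma> (k - m)
           \<le> 2 powr \<sigma> * decay nrm \<sigma> k * (decay nrm \<sigma> m + decay nrm \<sigma> (k - m))"
proof -
  let ?w = "decay nrm \<sigma>"
  have pos: "0 < ?w l" for l using decay_pos[OF assms(1)] .
  have big: "?w l \<le> 2 powr \<sigma> * ?w k" if "nrm0 nrm k \<le> 2 * nrm0 nrm l" for l
    unfolding decay_def using that assms(2) nrm0_ge_one[OF assms(1)]
    by (intro powr_neg_le_of_le_double) (auto intro: less_le_trans[OF zero_less_one])
  have "nrm0 nrm k \<le> 2 * nrm0 nrm m \<or> nrm0 nrm k \<le> 2 * nrm0 nrm (k - m)"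
    using nrm0_triangle[OF assms(1), of k m] by linarith
  then show ?thesis
  proof
    assume "nrm0 nrm k \<le> 2 * nrm0 nrm m"
    with big have "?w m * ?w (k - m) \<le> 2 powr \<sigma> * ?w k * ?w (k - m)"
      using pos by (intro mult_right_mono) (auto intro: less_imp_le)
    also have "\<dots> \<le> 2 powr \<sigma> * ?w k * (?w m + ?w (k - m))"
      using pos by (intro mult_left_mono) (auto intro: less_imp_le)
    finally show ?thesis .
  next
    assume "nrm0 nrm k \<le> 2 * nrm0 nrm (k - m)"
    with big have "?w m * ?w (k - m) \<le> ?w m * (2 powr \<sigma> * ?w k)"
      using pos by (intro mult_left_mono) (auto intro: less_imp_le)
    also have "\<dots> \<le> 2 powr \<sigma> * ?w k * (?w m + ?w (k - m))"
      using pos by (simp add: algebra_simps less_imp_le)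
    finally show ?thesis .
  qed
qed

lemma sum_decay_convolution_le:
  fixes nrm :: "int^'d \<Rightarrow> real"
  assumes "is_Zd_norm nrm" "\<sigma> > real CARD('d)" "finite M"
  shows "(\<Sum>m\<in>M. decay nrm \<sigma> m * decay nrm \<sigma> (k - m))
           \<le> 2 * 2 powr \<sigma> * (\<Sum>\<^sub>\<infinity>l. decay nrm \<sigma> l) * decay nrm \<sigma> k"
proof -
  let ?w = "decay nrm \<sigma>" and ?S = "\<Sum>\<^sub>\<infinity>l. decay nrm \<sigma> l"
  have "0 \<le> \<sigma>" using assms(2) by linarith
  have partial: "sum ?w A \<le> ?S" if "finite A" for A
    using that summable_decay[OF assms(1,2)] decay_pos[OF assms(1)]
    by (intro finite_sum_le_infsum) (auto simp: less_imp_le)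
  have "(\<Sum>m\<in>M. ?w m * ?w (k - m)) \<le> (\<Sum>m\<in>M. 2 powr \<sigma> * ?w k * (?w m + ?w (k - m)))"
    by (intro sum_mono decay_mult_le[OF assms(1) \<open>0 \<le> \<sigma>\<close>])
  also have "\<dots> = 2 powr \<sigma> * ?w k * (sum ?w M + (\<Sum>m\<in>M. ?w (k - m)))"
    by (simp add: distrib_left sum.distrib sum_distrib_left)
  also have "(\<Sum>m\<in>M. ?w (k - m)) = sum ?w ((\<lambda>m. k - m) ` M)"
    by (subst sum.reindex) (auto simp: inj_on_def)
  also have "2 powr \<sigma> * ?w k * (sum ?w M + sum ?w ((\<lambda>m. k - m) ` M)) \<le> 2 powr \<sigma> * ?w k * (?S + ?S)"
    using assms(3) decay_pos[OF assms(1)] by (intro mult_left_mono add_mono partial) (auto intro: less_imp_le)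
  finally show ?thesis by (simp add: algebra_simps)
qed

lemma sum_prod_list_le_iterated_convolution:
  fixes w :: "'a::ab_group_add \<Rightarrow> real"
  assumes nonneg: "\<And>m. 0 \<le> w m" and "1 \<le> w 0" and "0 \<le> K"
    and convolution: "\<And>M k. finite M \<Longrightarrow> (\<Sum>m\<in>M. w m * w (k - m)) \<le> K * w k"
  shows "finite F \<Longrightarrow> F \<subseteq> {ms. length ms = l \<and> sum_list ms = k}
           \<Longrightarrow> (\<Sum>ms\<in>F. prod_list (map w ms)) \<le> K ^ l * w k"
proof (induction l arbitrary: k F)
  case 0
  then have "F \<subseteq> {[]}" and "F = {[]} \<Longrightarrow> k = 0" by auto
  then consider "F = {}" | "F = {[]}" "k = 0" by blast
  then show ?case using nonneg \<open>1 \<le> w 0\<close> by cases auto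
next
  case (Suc l)
  \<comment> \<open>Split off the first frequency \<open>m\<close>; the tail then sums to \<open>k - m\<close>.\<close>
  let ?f = "\<lambda>ms. prod_list (map w ms)"
  define M where "M = hd ` F"
  define T where "T m = {t \<in> tl ` F. length t = l \<and> sum_list t = k - m}" for m
  have fin: "finite M" "\<And>m. finite (T m)" using Suc.prems(1) by (auto simp: M_def T_def)
  have "F \<subseteq> (\<lambda>(m, t). m # t) ` Sigma M T"
  proof
    fix x assume "x \<in> F"
    with Suc.prems(2) obtain m t where "x = m # t" "length t = l" "sum_list t = k - m"
      by (cases x) (auto simp: algebra_simps)
    with \<open>x \<in> F\<close> show "x \<in> (\<lambda>(m, t). m # t) ` Sigma M T"
      unfolding M_def T_def by (auto intro!: image_eqI[of _ _ "(m, t)"] image_eqI[of _ _ x])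
  qed
  then have "(\<Sum>ms\<in>F. ?f ms) \<le> (\<Sum>ms\<in>(\<lambda>(m, t). m # t) ` Sigma M T. ?f ms)"
    using fin nonneg by (intro sum_mono2) (auto intro!: mult_nonneg_nonneg prod_list_nonneg)
  also have "\<dots> = (\<Sum>m\<in>M. \<Sum>t\<in>T m. w m * ?f t)"
    using fin by (subst sum.reindex) (auto simp: inj_on_def sum.Sigma case_prod_beta)
  also have "\<dots> \<le> (\<Sum>m\<in>M. w m * (K ^ l * w (k - m)))"
    using fin nonneg by (intro sum_mono) (auto simp: sum_distrib_left[symmetric] T_def
        intro!: mult_left_mono Suc.IH)
  also have "\<dots> = K ^ l * (\<Sum>m\<in>M. w m * w (k - m))"
    by (simp add: sum_distrib_left algebra_simps)
  also have "\<dots> \<le> K ^ l * (K * w k)"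
    using convolution[OF fin(1)] \<open>0 \<le> K\<close> by (intro mult_left_mono) auto
  finally show ?case by (simp add: algebra_simps)
qed

section \<open>Fourier coefficients of polynomial nonlinearities\<close>

lemma abs_summable_on_and_norm_infsum_le:
  fixes f :: "'a \<Rightarrow> 'b::real_normed_vector"
  assumes "\<And>F. finite F \<Longrightarrow> F \<subseteq> A \<Longrightarrow> (\<Sum>x\<in>F. norm (f x)) \<le> B"
  shows "(\<lambda>x. norm (f x)) summable_on A \<and> norm (infsum f A) \<le> B"
proof
  show "(\<lambda>x. norm (f x)) summable_on A"
    using assms by (intro nonneg_bdd_above_summable_on bdd_aboveI) auto
  then have "norm (infsum f A) \<le> (\<Sum>\<^sub>\<infinity>x\<in>A. norm (f x))"
    by (rule norm_infsum_bound)
  also have "\<dots> \<le> B"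
    using \<open>(\<lambda>x. norm (f x)) summable_on A\<close> assms by (rule infsum_le_finite_sums)
  finally show "norm (infsum f A) \<le> B" .
qed

definition coeff_decay :: "(int^'d \<Rightarrow> real) \<Rightarrow> real \<Rightarrow> real \<Rightarrow> (int^'d \<Rightarrow> complex^'n) \<Rightarrow> bool" where
  "coeff_decay nrm s C a \<longleftrightarrow> (\<forall>k. k \<noteq> 0 \<longrightarrow> norm (a k) \<le> C / nrm k powr s) \<and> norm (a 0) \<le> C"

lemma coeff_decay_const_nonneg: "coeff_decay nrm s C a \<Longrightarrow> 0 \<le> C"
  unfolding coeff_decay_def by (meson norm_ge_zero order_trans)

lemma coeff_decay_norm_le: "coeff_decay nrm s C a \<Longrightarrow> norm (a m) \<le> C * decay nrm s m"
  by (cases "m = 0") (auto simp: coeff_decay_def decay_nonzero)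

lemma norm_mi_pow_le:
  assumes "is_Zd_norm nrm" "mi_abs \<alpha> \<le> r"
  shows "norm (mi_pow m \<alpha>) \<le> nrm0 nrm m ^ r"
proof -
  have "norm (mi_pow m \<alpha>) = (\<Prod>i\<in>UNIV. \<bar>real_of_int (m $ i)\<bar> ^ (\<alpha> $ i))"
    unfolding mi_pow_def by (simp add: prod_norm[symmetric] norm_power)
  also have "\<dots> \<le> (\<Prod>i\<in>UNIV. nrm0 nrm m ^ (\<alpha> $ i))"
    using abs_component_le_nrm0[OF assms(1)] by (intro prod_mono conjI power_mono) auto
  also have "\<dots> = nrm0 nrm m ^ mi_abs \<alpha>"
    by (simp add: mi_abs_def power_sum)
  also have "\<dots> \<le> nrm0 nrm m ^ r"
    using assms(2) nrm0_ge_one[OF assms(1)] by (rule power_increasing)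
  finally show ?thesis .
qed

lemma norm_var_coeff_le:
  assumes "is_Zd_norm nrm" "coeff_decay nrm s C a" "mi_abs (snd v) \<le> r"
  shows "norm (var_coeff a m v) \<le> C * decay nrm (s - r) m"
proof -
  have "nrm0 nrm m \<ge> 1" using nrm0_ge_one[OF assms(1)] .
  have "norm (var_coeff a m v) = norm (mi_pow m (snd v)) * norm (a m $ fst v)"
    by (simp add: var_coeff_def norm_mult norm_power)
  also have "\<dots> \<le> nrm0 nrm m ^ r * (C * decay nrm s m)"
    using norm_mi_pow_le[OF assms(1,3)] coeff_decay_norm_le[OF assms(2)]
      Finite_Cartesian_Product.norm_nth_le[of "a m" "fst v"] \<open>nrm0 nrm m \<ge> 1\<close>
    by (intro mult_mono) (auto intro: order_trans)
  also have "\<dots> = C * decay nrm (s - r) m"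
    using \<open>nrm0 nrm m \<ge> 1\<close> by (simp add: decay_def powr_realpow[symmetric] powr_add[symmetric])
  finally show ?thesis .
qed

lemma norm_conv_term_le:
  assumes "is_Zd_norm nrm" "coeff_decay nrm s C a" "\<forall>v\<in>set vs. mi_abs (snd v) \<le> r"
    and "length ms = length vs"
  shows "norm (conv_term a vs ms) \<le> C ^ length vs * prod_list (map (decay nrm (s - r)) ms)"
  using assms(3,4)
proof (induction vs arbitrary: ms)
  case Nil
  then show ?case by (simp add: conv_term_def)
next
  case (Cons v vs)
  then obtain m ms' where ms: "ms = m # ms'" "length ms' = length vs"
    by (cases ms) auto
  have "0 \<le> C * decay nrm (s - r) m"
    using coeff_decay_const_nonneg[OF assms(2)] decay_pos[OF assms(1)] by (simp add: less_imp_le)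
  have "norm (conv_term a (v # vs) ms) = norm (var_coeff a m v) * norm (conv_term a vs ms')"
    by (simp add: ms conv_term_def norm_mult)
  also have "\<dots> \<le> (C * decay nrm (s - r) m) * (C ^ length vs * prod_list (map (decay nrm (s - r)) ms'))"
    using Cons ms norm_var_coeff_le[OF assms(1,2)] \<open>0 \<le> C * decay nrm (s - r) m\<close>
    by (intro mult_mono) auto
  finally show ?case by (simp add: ms algebra_simps)
qed

definition decay_conv_const :: "(int^'d \<Rightarrow> real) \<Rightarrow> real \<Rightarrow> real" where
  "decay_conv_const nrm \<sigma> = 2 * 2 powr \<sigma> * (\<Sum>\<^sub>\<infinity>l. decay nrm \<sigma> l)"

lemma sum_prod_list_decay_le:
  fixes nrm :: "int^'d \<Rightarrow> real"
  assumes "is_Zd_norm nrm" "\<sigma> > real CARD('d)" "finite F" "F \<subseteq> conv_set l k"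
  shows "(\<Sum>ms\<in>F. prod_list (map (decay nrm \<sigma>) ms)) \<le> decay_conv_const nrm \<sigma> ^ l * decay nrm \<sigma> k"
proof (rule sum_prod_list_le_iterated_convolution)
  show "0 \<le> decay nrm \<sigma> m" for m
    using decay_pos[OF assms(1)] by (rule less_imp_le)
  then show "0 \<le> decay_conv_const nrm \<sigma>"
    by (simp add: decay_conv_const_def infsum_nonneg)
  show "(\<Sum>m\<in>M. decay nrm \<sigma> m * decay nrm \<sigma> (k - m)) \<le> decay_conv_const nrm \<sigma> * decay nrm \<sigma> k"
    if "finite M" for M k
    using sum_decay_convolution_le[OF assms(1,2) that] by (simp add: decay_conv_const_def)
qed (use assms in \<open>auto simp: conv_set_def\<close>)

lemma mono_coeff_bound:
  fixes nrm :: "int^'d \<Rightarrow> real" and a :: "int^'d \<Rightarrow> complex^'n"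
  assumes "is_Zd_norm nrm" "s > real (CARD('d) + r)" "coeff_decay nrm s C a"
    and "\<forall>v\<in>set vs. mi_abs (snd v) \<le> r"
  defines "K \<equiv> decay_conv_const nrm (s - r)"
  shows "(\<lambda>ms. norm (conv_term a vs ms)) summable_on conv_set (length vs) k \<and>
         norm (mono_coeff a vs k) \<le> (C * K) ^ length vs * decay nrm (s - r) k"
  unfolding mono_coeff_def
proof (rule abs_summable_on_and_norm_infsum_le)
  fix F assume F: "finite F" "F \<subseteq> conv_set (length vs) k"
  have "(\<Sum>ms\<in>F. norm (conv_term a vs ms))
          \<le> (\<Sum>ms\<in>F. C ^ length vs * prod_list (map (decay nrm (s - r)) ms))"
    using F(2) by (intro sum_mono norm_conv_term_le[OF assms(1,3,4)]) (auto simp: conv_set_def)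
  also have "\<dots> = C ^ length vs * (\<Sum>ms\<in>F. prod_list (map (decay nrm (s - r)) ms))"
    by (simp add: sum_distrib_left)
  also have "\<dots> \<le> C ^ length vs * (K ^ length vs * decay nrm (s - r) k)"
    using sum_prod_list_decay_le[OF assms(1) _ F] assms(2) coeff_decay_const_nonneg[OF assms(3)]
    by (intro mult_left_mono) (auto simp: K_def)
  finally show "(\<Sum>ms\<in>F. norm (conv_term a vs ms)) \<le> (C * K) ^ length vs * decay nrm (s - r) k"
    by (simp add: power_mult_distrib mult.assoc)
qed

definition poly_majorant :: "real \<Rightarrow> ('n,'d) poly_rep \<Rightarrow> real" where
  "poly_majorant x P = (\<Sum>(c, vs)\<leftarrow>P. norm c * x ^ length vs)"

lemma poly_coeff_bound:
  fixes nrm :: "int^'d \<Rightarrow> real" and a :: "int^'d \<Rightarrow> complex^'n"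
  assumes "is_Zd_norm nrm" "s > real (CARD('d) + r)" "coeff_decay nrm s C a"
    and "poly_order_le r P"
  defines "K \<equiv> decay_conv_const nrm (s - r)"
  shows "poly_abs_conv a P k \<and>
         norm (poly_coeff a P k) \<le> poly_majorant (C * K) P * decay nrm (s - r) k"
  using assms(4)
proof (induction P)
  case Nil
  then show ?case by (simp add: poly_abs_conv_def poly_coeff_def poly_majorant_def)
next
  case (Cons cvs P)
  obtain c vs where cvs: "cvs = (c, vs)" by fastforce
  have "poly_order_le r P" and vs: "\<forall>v\<in>set vs. mi_abs (snd v) \<le> r"
    using Cons.prems cvs by (auto simp: poly_order_le_def)
  note IH = Cons.IH[OF this(1)]
  note mono = mono_coeff_bound[OF assms(1-3) vs, of k, folded K_def]
  have "norm (poly_coeff a (cvs # P) k) \<le> norm c * norm (mono_coeff a vs k) + norm (poly_coeff a P k)"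
    by (simp add: cvs poly_coeff_def norm_mult[symmetric] norm_triangle_ineq)
  also have "\<dots> \<le> norm c * ((C * K) ^ length vs * decay nrm (s - r) k)
                   + poly_majorant (C * K) P * decay nrm (s - r) k"
    using IH mono by (intro add_mono mult_left_mono) auto
  also have "\<dots> = poly_majorant (C * K) (cvs # P) * decay nrm (s - r) k"
    by (simp add: cvs poly_majorant_def algebra_simps)
  finally show ?case
    using IH mono by (simp add: cvs poly_abs_conv_def)
qed

section \<open>The derivative symbols\<close>

lemma set_remove_pos_subset: "set (remove_pos S xs) \<subseteq> set xs"
  unfolding remove_pos_def by auto

lemma poly_order_le_dpoly: "poly_order_le r P \<Longrightarrow> poly_order_le r (dpoly v P)"
  unfolding poly_order_le_def dpoly_def using set_remove_pos_subset by fastforce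

lemma poly_order_le_d2poly: "poly_order_le r P \<Longrightarrow> poly_order_le r (d2poly v w P)"
  unfolding poly_order_le_def d2poly_def using set_remove_pos_subset by fastforce

lemma norm_vec_le_sum_norm: "norm (x :: 'a::real_normed_vector^'n) \<le> (\<Sum>i\<in>UNIV. norm (x $ i))"
  by (simp add: norm_vec_def L2_set_le_sum)

lemma norm_dNk_entry_le:
  assumes "is_Zd_norm nrm"
  shows "norm (dNk r N a k j $ e $ c)
           \<le> (\<Sum>\<alpha>\<in>mis_le r. norm (poly_coeff a (dpoly (c, \<alpha>) (N e)) (k - j))) * nrm0 nrm j ^ r"
proof -
  have "norm (dNk r N a k j $ e $ c) \<le> (\<Sum>\<alpha>\<in>mis_le r.
          norm (poly_coeff a (dpoly (c, \<alpha>) (N e)) (k - j)) * norm (mi_pow j \<alpha>))"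
    unfolding dNk_def by (simp add: norm_mult norm_power order_trans[OF norm_sum])
  also have "\<dots> \<le> (\<Sum>\<alpha>\<in>mis_le r. norm (poly_coeff a (dpoly (c, \<alpha>) (N e)) (k - j)) * nrm0 nrm j ^ r)"
    using norm_mi_pow_le[OF assms] by (intro sum_mono mult_left_mono) (auto simp: mis_le_def)
  finally show ?thesis by (simp add: sum_distrib_right)
qed

lemma norm_d2Nk_entry_le:
  assumes "is_Zd_norm nrm"
  shows "norm (d2Nk r N a k j1 j2 $ e $ c1 $ c2)
           \<le> (\<Sum>\<alpha>1\<in>mis_le r. \<Sum>\<alpha>2\<in>mis_le r.
                 norm (poly_coeff a (d2poly (c1, \<alpha>1) (c2, \<alpha>2) (N e)) (k - j1 - j2)))
             * (nrm0 nrm j1 ^ r * nrm0 nrm j2 ^ r)"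
proof -
  let ?p = "\<lambda>\<alpha>1 \<alpha>2. norm (poly_coeff a (d2poly (c1, \<alpha>1) (c2, \<alpha>2) (N e)) (k - j1 - j2))"
  have "norm (d2Nk r N a k j1 j2 $ e $ c1 $ c2) \<le> (\<Sum>\<alpha>1\<in>mis_le r. \<Sum>\<alpha>2\<in>mis_le r.
          norm (poly_coeff a (d2poly (c1, \<alpha>1) (c2, \<alpha>2) (N e)) (k - j1 - j2)
                  * \<i> ^ (mi_abs \<alpha>1 + mi_abs \<alpha>2) * mi_pow j1 \<alpha>1 * mi_pow j2 \<alpha>2))"
    unfolding d2Nk_def by (simp add: order_trans[OF norm_sum sum_mono[OF norm_sum]])
  also have "\<dots> = (\<Sum>\<alpha>1\<in>mis_le r. \<Sum>\<alpha>2\<in>mis_le r.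
          ?p \<alpha>1 \<alpha>2 * (norm (mi_pow j1 \<alpha>1) * norm (mi_pow j2 \<alpha>2)))"
    by (simp add: norm_mult norm_power mult.assoc)
  also have "\<dots> \<le> (\<Sum>\<alpha>1\<in>mis_le r. \<Sum>\<alpha>2\<in>mis_le r. ?p \<alpha>1 \<alpha>2 * (nrm0 nrm j1 ^ r * nrm0 nrm j2 ^ r))"
    using norm_mi_pow_le[OF assms] zero_le_power[OF nrm0_nonneg[OF assms]]
    by (intro sum_mono mult_left_mono mult_mono) (auto simp: mis_le_def)
  finally show ?thesis by (simp add: sum_distrib_right)
qed

context
  fixes a :: "int^'d \<Rightarrow> complex^'n" and B :: "('n,'d) poly_rep \<Rightarrow> real" and w :: "int^'d \<Rightarrow> real"
    and r :: nat and N :: "'n \<Rightarrow> ('n,'d) poly_rep"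
  assumes order_N: "\<forall>e. poly_order_le r (N e)"
    and poly_coeff_le: "\<And>P k. poly_order_le r P \<Longrightarrow> norm (poly_coeff a P k) \<le> B P * w k"
begin

lemma norm_Nk_le: "norm (Nk N a k) \<le> (\<Sum>e\<in>UNIV. B (N e)) * w k"
proof -
  have "norm (Nk N a k) \<le> (\<Sum>e\<in>UNIV. norm (poly_coeff a (N e) k))"
    using norm_vec_le_sum_norm[of "Nk N a k"] by (simp add: Nk_def)
  also have "\<dots> \<le> (\<Sum>e\<in>UNIV. B (N e) * w k)"
    using order_N by (intro sum_mono poly_coeff_le) auto
  finally show ?thesis by (simp add: sum_distrib_right)
qed

lemma norm_dNk_le:
  assumes "is_Zd_norm nrm"
  shows "norm (dNk r N a k j)
           \<le> (\<Sum>e\<in>UNIV. \<Sum>c\<in>UNIV. \<Sum>\<alpha>\<in>mis_le r. B (dpoly (c, \<alpha>) (N e))) * w (k - j) * nrm0 nrm j ^ r"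
proof -
  have "norm (dNk r N a k j) \<le> (\<Sum>e\<in>UNIV. \<Sum>c\<in>UNIV. norm (dNk r N a k j $ e $ c))"
    by (intro order_trans[OF norm_vec_le_sum_norm] sum_mono norm_vec_le_sum_norm)
  also have "\<dots> \<le> (\<Sum>e\<in>UNIV. \<Sum>c\<in>UNIV.
                     (\<Sum>\<alpha>\<in>mis_le r. B (dpoly (c, \<alpha>) (N e)) * w (k - j)) * nrm0 nrm j ^ r)"
    using nrm0_nonneg[OF assms]
    by (intro sum_mono order_trans[OF norm_dNk_entry_le[OF assms]] mult_right_mono poly_coeff_le)
      (auto intro!: poly_order_le_dpoly simp: order_N)
  finally show ?thesis by (simp add: sum_distrib_right)
qed

lemma norm_d2Nk_le:
  assumes "is_Zd_norm nrm"
  shows "norm (d2Nk r N a k j1 j2)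
           \<le> (\<Sum>e\<in>UNIV. \<Sum>c1\<in>UNIV. \<Sum>c2\<in>UNIV. \<Sum>\<alpha>1\<in>mis_le r. \<Sum>\<alpha>2\<in>mis_le r.
                 B (d2poly (c1, \<alpha>1) (c2, \<alpha>2) (N e)))
             * w (k - j1 - j2) * (nrm0 nrm j1 ^ r * nrm0 nrm j2 ^ r)"
proof -
  have "norm (d2Nk r N a k j1 j2)
          \<le> (\<Sum>e\<in>UNIV. \<Sum>c1\<in>UNIV. \<Sum>c2\<in>UNIV. norm (d2Nk r N a k j1 j2 $ e $ c1 $ c2))"
    by (intro order_trans[OF norm_vec_le_sum_norm] sum_mono norm_vec_le_sum_norm)
  also have "\<dots> \<le> (\<Sum>e\<in>UNIV. \<Sum>c1\<in>UNIV. \<Sum>c2\<in>UNIV.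
                     (\<Sum>\<alpha>1\<in>mis_le r. \<Sum>\<alpha>2\<in>mis_le r. B (d2poly (c1, \<alpha>1) (c2, \<alpha>2) (N e)) * w (k - j1 - j2))
                     * (nrm0 nrm j1 ^ r * nrm0 nrm j2 ^ r))"
    using nrm0_nonneg[OF assms]
    by (intro sum_mono order_trans[OF norm_d2Nk_entry_le[OF assms]] mult_right_mono poly_coeff_le)
      (auto intro!: poly_order_le_d2poly simp: order_N)
  finally show ?thesis by (simp add: sum_distrib_right)
qed

end

theorem mainTheorem1:
  fixes N :: "'n::finite \<Rightarrow> ('n, 'd::finite) poly_rep"
    and r :: nat and s C :: real
    and nrm :: "int^'d \<Rightarrow> real"
  assumes "is_Zd_norm nrm"
    and "\<forall>e. poly_order_le r (N e)"
    and "s > real (CARD('d) + r)"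
    and "C > 0"
  shows "\<exists>D D1 D2. \<forall>a :: int^'d \<Rightarrow> complex^'n.
     ((\<forall>k. k \<noteq> 0 \<longrightarrow> norm (a k) \<le> C / nrm k powr s) \<and> norm (a 0) \<le> C) \<longrightarrow>
     ((\<forall>k e. poly_abs_conv a (N e) k) \<and>
      (\<forall>k e c \<alpha>. poly_abs_conv a (dpoly (c,\<alpha>) (N e)) k) \<and>
      (\<forall>k e c1 c2 \<alpha>1 \<alpha>2. poly_abs_conv a (d2poly (c1,\<alpha>1) (c2,\<alpha>2) (N e)) k) \<and>
      (\<forall>k. k \<noteq> 0 \<longrightarrow> norm (Nk N a k) \<le> D / nrm k powr (s - real r)) \<and>
      norm (Nk N a 0) \<le> D \<and>
      (\<forall>k j. k \<noteq> j \<longrightarrow>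
          norm (dNk r N a k j) \<le> D1 * nrm0 nrm j ^ r / nrm (k - j) powr (s - real r)) \<and>
      (\<forall>j. norm (dNk r N a j j) \<le> D1 * nrm0 nrm j ^ r) \<and>
      (\<forall>k j1 j2. k \<noteq> j1 + j2 \<longrightarrow>
          norm (d2Nk r N a k j1 j2)
            \<le> D2 * nrm0 nrm j1 ^ r * nrm0 nrm j2 ^ r / nrm (k - j1 - j2) powr (s - real r)) \<and>
      (\<forall>j1 j2. norm (d2Nk r N a (j1 + j2) j1 j2) \<le> D2 * nrm0 nrm j1 ^ r * nrm0 nrm j2 ^ r))"
proof -
  define \<sigma> where "\<sigma> = s - real r"
  define B :: "('n,'d) poly_rep \<Rightarrow> real" where "B = poly_majorant (C * decay_conv_const nrm \<sigma>)"
  define D where "D = (\<Sum>e\<in>UNIV. B (N e))"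
  define D1 where "D1 = (\<Sum>e\<in>UNIV. \<Sum>c\<in>UNIV. \<Sum>\<alpha>\<in>mis_le r. B (dpoly (c, \<alpha>) (N e)))"
  define D2 where "D2 = (\<Sum>e\<in>UNIV. \<Sum>c1\<in>UNIV. \<Sum>c2\<in>UNIV. \<Sum>\<alpha>1\<in>mis_le r. \<Sum>\<alpha>2\<in>mis_le r.
                          B (d2poly (c1, \<alpha>1) (c2, \<alpha>2) (N e)))"
  show ?thesis
  proof (rule exI[of _ D], rule exI[of _ D1], rule exI[of _ D2], intro allI impI conjI)
    fix a :: "int^'d \<Rightarrow> complex^'n"
    assume "(\<forall>k. k \<noteq> 0 \<longrightarrow> norm (a k) \<le> C / nrm k powr s) \<and> norm (a 0) \<le> C"
    then have a: "coeff_decay nrm s C a" by (simp add: coeff_decay_def)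
    have coeff: "poly_abs_conv a P k \<and> norm (poly_coeff a P k) \<le> B P * decay nrm \<sigma> k"
      if "poly_order_le r P" for P k
      using poly_coeff_bound[OF assms(1,3) a that] by (simp add: B_def \<sigma>_def)
    note Nk = norm_Nk_le[OF assms(2) coeff[THEN conjunct2], folded D_def]
    note dNk = norm_dNk_le[OF assms(2) coeff[THEN conjunct2] assms(1), folded D1_def]
    note d2Nk = norm_d2Nk_le[OF assms(2) coeff[THEN conjunct2] assms(1), folded D2_def]
    show "poly_abs_conv a (N e) k" for k e
      using coeff assms(2) by blast
    show "poly_abs_conv a (dpoly (c, \<alpha>) (N e)) k" for k e c \<alpha>
      using coeff assms(2) poly_order_le_dpoly by blast
    show "poly_abs_conv a (d2poly (c1, \<alpha>1) (c2, \<alpha>2) (N e)) k" for k e c1 c2 \<alpha>1 \<alpha>2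
      using coeff assms(2) poly_order_le_d2poly by blast
    show "norm (Nk N a k) \<le> D / nrm k powr (s - real r)" if "k \<noteq> 0" for k
      using Nk[of k] that by (simp add: decay_nonzero \<sigma>_def)
    show "norm (Nk N a 0) \<le> D"
      using Nk[of 0] by simp
    show "norm (dNk r N a k j) \<le> D1 * nrm0 nrm j ^ r / nrm (k - j) powr (s - real r)" if "k \<noteq> j" for k j
      using dNk[of k j] that by (simp add: decay_nonzero \<sigma>_def)
    show "norm (dNk r N a j j) \<le> D1 * nrm0 nrm j ^ r" for j
      using dNk[of j j] by simp
    show "norm (d2Nk r N a k j1 j2)
            \<le> D2 * nrm0 nrm j1 ^ r * nrm0 nrm j2 ^ r / nrm (k - j1 - j2) powr (s - real r)"
      if "k \<noteq> j1 + j2" for k j1 j2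
      using d2Nk[of k j1 j2] that by (simp add: decay_nonzero \<sigma>_def diff_diff_eq mult.assoc)
    show "norm (d2Nk r N a (j1 + j2) j1 j2) \<le> D2 * nrm0 nrm j1 ^ r * nrm0 nrm j2 ^ r" for j1 j2
      using d2Nk[of "j1 + j2" j1 j2] by (simp add: mult.assoc)
  qed
qed

end
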